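(* Let $\mathcal{E}=(E,\vdash)$ be an event structure and let $C$ be its set of left-closed configurations. Then: (1) if $\mathcal{E}$ is singular, $C$ is closed under bounded unions; (2) if $\mathcal{E}$ is conjunctive, $C$ is closed under nonempty intersections; (3) if $\mathcal{E}$ is locally conjunctive, $C$ is closed under bounded nonempty intersections; (4) if $\mathcal{E}$ has finite conflict, so does $(E,C)$; (5) if $\mathcal{E}$ has binary conflict, so does $(E,C)$; (6) if $\mathcal{E}$ is singular and has finite conflict, $C$ is closed under finitely consistent unions; (7) if $\mathcal{E}$ is singular and has binary conflict, $C$ is closed under pairwise consistent unions; (8) if $\mathcal{E}$ is locally conjunctive and has finite conflict, $C$ is closed under finitely consistent nonempty intersections; (9) if $\mathcal{E}$ is locally conjunctive and has binary conflict, $C$ is closed under pairwise consistent nonempty intersections.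
   Context: An event structure is $(E,\vdash)$ with $\vdash\subseteq\mathcal{P}(E)\times\mathcal{P}(E)$; $X\subseteq E$ is a left-closed configuration iff for all $Y\subseteq X$ there is $Z\subseteq X$ with $Z\vdash Y$. For the event structure write $\mathrm{Con}(X)$ iff for every $Y\subseteq X$ there is $Z\subseteq E$ with $Z\vdash Y$. The event structure is singular if $X\vdash Y$ implies $X=\emptyset$ or $|Y|=1$; conjunctive if whenever $X_i\vdash Y$ for all $i\in I\neq\emptyset$ then $\bigcap_{i}X_i\vdash Y$; locally conjunctive if whenever $X_i\vdash Y$ for all $i\in I\ne\emptyset$ and $\mathrm{Con}(\bigcup_iX_i\cup Y)$ then $\bigcap_iX_i\vdash Y$; it has finite conflict if $\emptyset\vdash X$ for every infinite $X$; binary conflict if $\emptyset\vdash X$ for every $X$ with $|X|>2$. For a configuration structure $(E,C)$ ($C\subseteq\mathcal{P}(E)$): $X$ is consistent, $\mathrm{Con}_C(X)$, if $X\subseteq z$ for some $z\in C$; finitely consistent if every finite subset is consistent; pairwise consistent if every subset of size $\le2$ is consistent. $C$ is closed under bounded unions if $A\subseteq C$ and $\bigcup A$ consistent imply $\bigcup A\in C$; under nonempty intersections if $\emptyset\ne A\subseteq C$ implies $\bigcap A\in C$; under bounded nonempty intersections if $\emptyset\ne A\subseteq C$ and $\bigcup A$ consistent imply $\bigcap A\in C$; under finitely (resp. pairwise) consistent unions if $A\subseteq C$ and $\bigcup A$ finitely (resp. pairwise) consistent imply $\bigcup A\in C$; under finitely (resp. pairwise) consistent nonempty intersections if $\emptyset\ne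 A\subseteq C$ and $\bigcup A$ finitely (resp. pairwise) consistent imply $\bigcap A\in C$. $(E,C)$ has finite conflict if, for every $X\subseteq E$, whenever every finite $Y\subseteq X$ satisfies $Y\subseteq z\subseteq X$ for some $z\in C$, then $X\in C$; it has binary conflict if the same holds with "finite $Y$" replaced by "$Y$ with $|Y|\le2$". *)

theory Defs
  imports Main
begin

text \<open>An event structure (E, ent) with ent \<subseteq> P(E) \<times> P(E); ent X Y means X \<turnstile> Y.\<close>
definition event_structure :: "'a set \<Rightarrow> ('a set \<Rightarrow> 'a set \<Rightarrow> bool) \<Rightarrow> bool" where
  "event_structure E ent \<longleftrightarrow> (\<forall>X Y. ent X Y \<longrightarrow> X \<subseteq> E \<and> Y \<subseteq> E)"

definition lconfigs :: "'a set \<Rightarrow> ('a set \<Rightarrow> 'a set \<Rightarrow> bool) \<Rightarrow> 'a set set" where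
  "lconfigs E ent = {X. X \<subseteq> E \<and> (\<forall>Y. Y \<subseteq> X \<longrightarrow> (\<exists>Z. Z \<subseteq> X \<and> ent Z Y))}"

definition es_Con :: "'a set \<Rightarrow> ('a set \<Rightarrow> 'a set \<Rightarrow> bool) \<Rightarrow> 'a set \<Rightarrow> bool" where
  "es_Con E ent X \<longleftrightarrow> (\<forall>Y. Y \<subseteq> X \<longrightarrow> (\<exists>Z. Z \<subseteq> E \<and> ent Z Y))"

definition es_singular :: "'a set \<Rightarrow> ('a set \<Rightarrow> 'a set \<Rightarrow> bool) \<Rightarrow> bool" where
  "es_singular E ent \<longleftrightarrow> (\<forall>X Y. ent X Y \<longrightarrow> X = {} \<or> card Y = 1)"

text \<open>Families indexed by a nonempty set I are represented by nonempty sets of sets (their ranges).\<close>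
definition es_conjunctive :: "'a set \<Rightarrow> ('a set \<Rightarrow> 'a set \<Rightarrow> bool) \<Rightarrow> bool" where
  "es_conjunctive E ent \<longleftrightarrow>
     (\<forall>\<X> Y. \<X> \<noteq> {} \<and> (\<forall>X\<in>\<X>. ent X Y) \<longrightarrow> ent (\<Inter>\<X>) Y)"

definition es_locally_conjunctive :: "'a set \<Rightarrow> ('a set \<Rightarrow> 'a set \<Rightarrow> bool) \<Rightarrow> bool" where
  "es_locally_conjunctive E ent \<longleftrightarrow>
     (\<forall>\<X> Y. \<X> \<noteq> {} \<and> (\<forall>X\<in>\<X>. ent X Y) \<and> es_Con E ent (\<Union>\<X> \<union> Y) \<longrightarrow> ent (\<Inter>\<X>) Y)"

definition es_finite_conflict :: "'a set \<Rightarrow> ('a set \<Rightarrow> 'a set \<Rightarrow> bool) \<Rightarrow> bool" where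
  "es_finite_conflict E ent \<longleftrightarrow> (\<forall>X. X \<subseteq> E \<and> infinite X \<longrightarrow> ent {} X)"

definition es_binary_conflict :: "'a set \<Rightarrow> ('a set \<Rightarrow> 'a set \<Rightarrow> bool) \<Rightarrow> bool" where
  "es_binary_conflict E ent \<longleftrightarrow> (\<forall>X. X \<subseteq> E \<and> (infinite X \<or> 2 < card X) \<longrightarrow> ent {} X)"

definition cs_Con :: "'a set set \<Rightarrow> 'a set \<Rightarrow> bool" where
  "cs_Con C X \<longleftrightarrow> (\<exists>z\<in>C. X \<subseteq> z)"

definition cs_fin_Con :: "'a set set \<Rightarrow> 'a set \<Rightarrow> bool" where
  "cs_fin_Con C X \<longleftrightarrow> (\<forall>Y. Y \<subseteq> X \<and> finite Y \<longrightarrow> cs_Con C Y)"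

definition cs_pair_Con :: "'a set set \<Rightarrow> 'a set \<Rightarrow> bool" where
  "cs_pair_Con C X \<longleftrightarrow> (\<forall>Y. Y \<subseteq> X \<and> finite Y \<and> card Y \<le> 2 \<longrightarrow> cs_Con C Y)"

definition closed_bounded_unions :: "'a set set \<Rightarrow> bool" where
  "closed_bounded_unions C \<longleftrightarrow> (\<forall>A. A \<subseteq> C \<and> cs_Con C (\<Union>A) \<longrightarrow> \<Union>A \<in> C)"

definition closed_nonempty_inters :: "'a set set \<Rightarrow> bool" where
  "closed_nonempty_inters C \<longleftrightarrow> (\<forall>A. A \<noteq> {} \<and> A \<subseteq> C \<longrightarrow> \<Inter>A \<in> C)"

definition closed_bounded_nonempty_inters :: "'a set set \<Rightarrow> bool" where
  "closed_bounded_nonempty_inters C \<longleftrightarrow>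
     (\<forall>A. A \<noteq> {} \<and> A \<subseteq> C \<and> cs_Con C (\<Union>A) \<longrightarrow> \<Inter>A \<in> C)"

definition closed_fin_con_unions :: "'a set set \<Rightarrow> bool" where
  "closed_fin_con_unions C \<longleftrightarrow> (\<forall>A. A \<subseteq> C \<and> cs_fin_Con C (\<Union>A) \<longrightarrow> \<Union>A \<in> C)"

definition closed_pair_con_unions :: "'a set set \<Rightarrow> bool" where
  "closed_pair_con_unions C \<longleftrightarrow> (\<forall>A. A \<subseteq> C \<and> cs_pair_Con C (\<Union>A) \<longrightarrow> \<Union>A \<in> C)"

definition closed_fin_con_nonempty_inters :: "'a set set \<Rightarrow> bool" where
  "closed_fin_con_nonempty_inters C \<longleftrightarrow>
     (\<forall>A. A \<noteq> {} \<and> A \<subseteq> C \<and> cs_fin_Con C (\<Union>A) \<longrightarrow> \<Inter>A \<in> C)"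

definition closed_pair_con_nonempty_inters :: "'a set set \<Rightarrow> bool" where
  "closed_pair_con_nonempty_inters C \<longleftrightarrow>
     (\<forall>A. A \<noteq> {} \<and> A \<subseteq> C \<and> cs_pair_Con C (\<Union>A) \<longrightarrow> \<Inter>A \<in> C)"

definition cs_finite_conflict :: "'a set \<Rightarrow> 'a set set \<Rightarrow> bool" where
  "cs_finite_conflict E C \<longleftrightarrow>
     (\<forall>X. X \<subseteq> E \<and> (\<forall>Y. Y \<subseteq> X \<and> finite Y \<longrightarrow> (\<exists>z\<in>C. Y \<subseteq> z \<and> z \<subseteq> X)) \<longrightarrow> X \<in> C)"

definition cs_binary_conflict :: "'a set \<Rightarrow> 'a set set \<Rightarrow> bool" where
  "cs_binary_conflict E C \<longleftrightarrow>
     (\<forall>X. X \<subseteq> E \<and> (\<forall>Y. Y \<subseteq> X \<and> finite Y \<and> card Y \<le> 2 \<longrightarrow> (\<exists>z\<in>C. Y \<subseteq> z \<and> z \<subseteq> X)) \<longrightarrow> X \<in> C)"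

end

theory Submission
  imports Defs
begin

text \<open>
  Every closure property of left-closed configurations reduces to one local question: given
  \<open>Y \<subseteq> X\<close>, find an enabling set \<open>Z \<turnstile> Y\<close> inside \<open>X\<close>. For a union, a singular
  \<open>Z \<noteq> {}\<close> enables a single event, which lies in one of the united configurations; for an
  intersection, the enabling sets found in the individual configurations intersect to an enabling
  set inside the intersection by (local) conjunctivity. Finite (binary) conflict disposes of all
  infinite (more than two-element) \<open>Y\<close> via \<open>{} \<turnstile> Y\<close>, so consistency is only needed for
  the remaining small sets.
\<close>

lemma lconfigs_subset: "X \<in> lconfigs E ent \<Longrightarrow> X \<subseteq> E"
  by (simp add: lconfigs_def)

lemma lconfigs_enabled: "X \<in> lconfigs E ent \<Longrightarrow> Y \<subseteq> X \<Longrightarrow> \<exists>Z\<subseteq>X. ent Z Y"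
  by (simp add: lconfigs_def)

lemma lconfigsI: "X \<subseteq> E \<Longrightarrow> (\<And>Y. Y \<subseteq> X \<Longrightarrow> \<exists>Z\<subseteq>X. ent Z Y) \<Longrightarrow> X \<in> lconfigs E ent"
  by (simp add: lconfigs_def)

lemma es_Con_mono: "es_Con E ent W \<Longrightarrow> V \<subseteq> W \<Longrightarrow> es_Con E ent V"
  unfolding es_Con_def by (meson order_trans)

lemma es_Con_lconfig: "z \<in> lconfigs E ent \<Longrightarrow> es_Con E ent z"
  unfolding es_Con_def by (meson lconfigs_enabled lconfigs_subset order_trans)

lemma lconfigs_Union:
  assumes singular: "es_singular E ent" and A: "A \<subseteq> lconfigs E ent"
    and covered: "\<And>Y. Y \<subseteq> \<Union>A \<Longrightarrow> ent {} Y \<or> cs_Con (lconfigs E ent) Y"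
  shows "\<Union>A \<in> lconfigs E ent"
proof (rule lconfigsI)
  show "\<Union>A \<subseteq> E"
    using A lconfigs_subset by blast
next
  fix Y assume Y: "Y \<subseteq> \<Union>A"
  show "\<exists>Z\<subseteq>\<Union>A. ent Z Y"
  proof (cases "ent {} Y")
    case True
    then show ?thesis
      by blast
  next
    case False
    then obtain z where z: "z \<in> lconfigs E ent" "Y \<subseteq> z"
      using covered[OF Y] unfolding cs_Con_def by blast
    then obtain Z where "ent Z Y" "Z \<noteq> {}"
      using False lconfigs_enabled[OF z] by blast
    then have "card Y = 1"
      using singular unfolding es_singular_def by blast
    then obtain e where "Y = {e}"
      by (rule card_1_singletonE)
    then obtain a where "a \<in> A" "Y \<subseteq> a"
      using Y by blast
    then show ?thesis
      using A lconfigs_enabled[of a E ent Y] by blast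
  qed
qed

lemma lconfigs_Inter:
  assumes A: "A \<noteq> {}" "A \<subseteq> lconfigs E ent"
    and conj: "\<And>\<X> Y. Y \<subseteq> \<Inter>A \<Longrightarrow> \<X> \<noteq> {} \<Longrightarrow> \<forall>X\<in>\<X>. ent X Y \<Longrightarrow> \<Union>\<X> \<subseteq> \<Union>A
      \<Longrightarrow> ent (\<Inter>\<X>) Y"
  shows "\<Inter>A \<in> lconfigs E ent"
proof (rule lconfigsI)
  show "\<Inter>A \<subseteq> E"
    using A lconfigs_subset by blast
next
  fix Y assume Y: "Y \<subseteq> \<Inter>A"
  define \<X> where "\<X> = {Z. (\<exists>a\<in>A. Z \<subseteq> a) \<and> ent Z Y}"
  have witness: "\<exists>Z\<in>\<X>. Z \<subseteq> a" if "a \<in> A" for a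
  proof -
    have "a \<in> lconfigs E ent" "Y \<subseteq> a"
      using that Y A(2) by auto
    then obtain Z where "Z \<subseteq> a" "ent Z Y"
      by (blast dest: lconfigs_enabled)
    then show ?thesis
      using that unfolding \<X>_def by blast
  qed
  have "\<X> \<noteq> {}"
    using witness A(1) by blast
  moreover have "\<forall>X\<in>\<X>. ent X Y" "\<Union>\<X> \<subseteq> \<Union>A"
    unfolding \<X>_def by blast+
  ultimately have "ent (\<Inter>\<X>) Y"
    by (rule conj[OF Y])
  moreover have "\<Inter>\<X> \<subseteq> \<Inter>A"
    using witness by blast
  ultimately show "\<exists>Z\<subseteq>\<Inter>A. ent Z Y"
    by blast
qed

lemma lconfigs_Inter_conjunctive:
  "es_conjunctive E ent \<Longrightarrow> A \<noteq> {} \<Longrightarrow> A \<subseteq> lconfigs E ent \<Longrightarrow> \<Inter>A \<in> lconfigs E ent"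
  by (rule lconfigs_Inter) (auto simp: es_conjunctive_def)

lemma lconfigs_Inter_locally_conjunctive:
  assumes "es_locally_conjunctive E ent" "A \<noteq> {}" "A \<subseteq> lconfigs E ent" "es_Con E ent (\<Union>A)"
  shows "\<Inter>A \<in> lconfigs E ent"
proof (rule lconfigs_Inter)
  fix \<X> Y assume "Y \<subseteq> \<Inter>A" "\<X> \<noteq> {}" "\<forall>X\<in>\<X>. ent X Y" "\<Union>\<X> \<subseteq> \<Union>A"
  moreover from \<open>Y \<subseteq> \<Inter>A\<close> \<open>A \<noteq> {}\<close> have "Y \<subseteq> \<Union>A"
    by blast
  ultimately show "ent (\<Inter>\<X>) Y"
    using assms(1,4) es_Con_mono[of E ent "\<Union>A" "\<Union>\<X> \<union> Y"]
    unfolding es_locally_conjunctive_def by blast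
qed (use assms in auto)

lemma lconfigs_Union_bounded:
  assumes "es_singular E ent" "A \<subseteq> lconfigs E ent" "cs_Con (lconfigs E ent) (\<Union>A)"
  shows "\<Union>A \<in> lconfigs E ent"
proof (rule lconfigs_Union[OF assms(1,2)])
  show "ent {} Y \<or> cs_Con (lconfigs E ent) Y" if "Y \<subseteq> \<Union>A" for Y
    using that assms(3) unfolding cs_Con_def by blast
qed

lemma lconfigs_Inter_bounded:
  assumes "es_locally_conjunctive E ent" "A \<noteq> {}" "A \<subseteq> lconfigs E ent"
    "cs_Con (lconfigs E ent) (\<Union>A)"
  shows "\<Inter>A \<in> lconfigs E ent"
proof (rule lconfigs_Inter_locally_conjunctive[OF assms(1-3)])
  obtain z where "z \<in> lconfigs E ent" "\<Union>A \<subseteq> z"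
    using assms(4) unfolding cs_Con_def by blast
  then show "es_Con E ent (\<Union>A)"
    using es_Con_lconfig es_Con_mono by blast
qed

definition at_most_two :: "'a set \<Rightarrow> bool" where
  "at_most_two Y \<longleftrightarrow> finite Y \<and> card Y \<le> 2"

definition es_conflict_beyond :: "('a set \<Rightarrow> bool) \<Rightarrow> 'a set \<Rightarrow> ('a set \<Rightarrow> 'a set \<Rightarrow> bool) \<Rightarrow> bool"
  where "es_conflict_beyond small E ent \<longleftrightarrow> (\<forall>X. X \<subseteq> E \<and> \<not> small X \<longrightarrow> ent {} X)"

definition cs_small_Con :: "('a set \<Rightarrow> bool) \<Rightarrow> 'a set set \<Rightarrow> 'a set \<Rightarrow> bool" where
  "cs_small_Con small C X \<longleftrightarrow> (\<forall>Y. Y \<subseteq> X \<and> small Y \<longrightarrow> cs_Con C Y)"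

definition cs_conflict_beyond :: "('a set \<Rightarrow> bool) \<Rightarrow> 'a set \<Rightarrow> 'a set set \<Rightarrow> bool" where
  "cs_conflict_beyond small E C \<longleftrightarrow>
     (\<forall>X. X \<subseteq> E \<and> (\<forall>Y. Y \<subseteq> X \<and> small Y \<longrightarrow> (\<exists>z\<in>C. Y \<subseteq> z \<and> z \<subseteq> X)) \<longrightarrow> X \<in> C)"

lemma es_conflict_beyondD: "es_conflict_beyond small E ent \<Longrightarrow> X \<subseteq> E \<Longrightarrow> \<not> small X \<Longrightarrow> ent {} X"
  by (simp add: es_conflict_beyond_def)

lemma cs_small_ConD: "cs_small_Con small C X \<Longrightarrow> Y \<subseteq> X \<Longrightarrow> small Y \<Longrightarrow> cs_Con C Y"
  by (simp add: cs_small_Con_def)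

lemma es_finite_conflict_iff: "es_finite_conflict E ent \<longleftrightarrow> es_conflict_beyond finite E ent"
  by (simp add: es_finite_conflict_def es_conflict_beyond_def)

lemma es_binary_conflict_iff: "es_binary_conflict E ent \<longleftrightarrow> es_conflict_beyond at_most_two E ent"
  by (auto simp: es_binary_conflict_def es_conflict_beyond_def at_most_two_def not_le)

lemma cs_fin_Con_iff: "cs_fin_Con C X \<longleftrightarrow> cs_small_Con finite C X"
  by (simp add: cs_fin_Con_def cs_small_Con_def)

lemma cs_pair_Con_iff: "cs_pair_Con C X \<longleftrightarrow> cs_small_Con at_most_two C X"
  by (simp add: cs_pair_Con_def cs_small_Con_def at_most_two_def conj_assoc)

lemma cs_finite_conflict_iff: "cs_finite_conflict E C \<longleftrightarrow> cs_conflict_beyond finite E C"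
  by (simp add: cs_finite_conflict_def cs_conflict_beyond_def)

lemma cs_binary_conflict_iff: "cs_binary_conflict E C \<longleftrightarrow> cs_conflict_beyond at_most_two E C"
  by (simp add: cs_binary_conflict_def cs_conflict_beyond_def at_most_two_def conj_assoc)

lemma cs_conflict_beyond_lconfigs:
  assumes "es_conflict_beyond small E ent"
  shows "cs_conflict_beyond small E (lconfigs E ent)"
  unfolding cs_conflict_beyond_def
proof (intro allI impI)
  fix X assume X: "X \<subseteq> E \<and> (\<forall>Y. Y \<subseteq> X \<and> small Y \<longrightarrow> (\<exists>z\<in>lconfigs E ent. Y \<subseteq> z \<and> z \<subseteq> X))"
  show "X \<in> lconfigs E ent"
  proof (rule lconfigsI)
    show "X \<subseteq> E"
      using X by blast
  next
    fix Y assume Y: "Y \<subseteq> X"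
    show "\<exists>Z\<subseteq>X. ent Z Y"
    proof (cases "small Y")
      case True
      then obtain z where z: "z \<in> lconfigs E ent" "Y \<subseteq> z" and "z \<subseteq> X"
        using X Y by blast
      moreover obtain Z where "Z \<subseteq> z" "ent Z Y"
        using lconfigs_enabled[OF z] by blast
      ultimately show ?thesis
        by blast
    next
      case False
      moreover have "Y \<subseteq> E"
        using X Y by blast
      ultimately show ?thesis
        using es_conflict_beyondD[OF assms] by blast
    qed
  qed
qed

lemma es_Con_if_cs_small_Con:
  assumes "es_conflict_beyond small E ent" "W \<subseteq> E" "cs_small_Con small (lconfigs E ent) W"
  shows "es_Con E ent W"
  unfolding es_Con_def
proof (intro allI impI)
  fix Y assume Y: "Y \<subseteq> W"
  show "\<exists>Z\<subseteq>E. ent Z Y"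
  proof (cases "small Y")
    case True
    then obtain z where z: "z \<in> lconfigs E ent" "Y \<subseteq> z"
      using cs_small_ConD[OF assms(3) Y] unfolding cs_Con_def by blast
    then show ?thesis
      using es_Con_lconfig[OF z(1)] unfolding es_Con_def by blast
  next
    case False
    moreover have "Y \<subseteq> E"
      using Y assms(2) by blast
    ultimately show ?thesis
      using es_conflict_beyondD[OF assms(1)] by blast
  qed
qed

lemma lconfigs_Union_cs_small_Con:
  assumes "es_singular E ent" "es_conflict_beyond small E ent" "A \<subseteq> lconfigs E ent"
    "cs_small_Con small (lconfigs E ent) (\<Union>A)"
  shows "\<Union>A \<in> lconfigs E ent"
proof (rule lconfigs_Union[OF assms(1,3)])
  fix Y assume Y: "Y \<subseteq> \<Union>A"
  show "ent {} Y \<or> cs_Con (lconfigs E ent) Y"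
  proof (cases "small Y")
    case True
    then show ?thesis
      using cs_small_ConD[OF assms(4) Y] by blast
  next
    case False
    moreover have "Y \<subseteq> E"
      using Y assms(3) lconfigs_subset by blast
    ultimately show ?thesis
      using es_conflict_beyondD[OF assms(2)] by blast
  qed
qed

lemma lconfigs_Inter_cs_small_Con:
  assumes "es_locally_conjunctive E ent" "es_conflict_beyond small E ent"
    "A \<noteq> {}" "A \<subseteq> lconfigs E ent" "cs_small_Con small (lconfigs E ent) (\<Union>A)"
  shows "\<Inter>A \<in> lconfigs E ent"
proof (rule lconfigs_Inter_locally_conjunctive[OF assms(1,3,4)])
  show "es_Con E ent (\<Union>A)"
    using es_Con_if_cs_small_Con[OF assms(2) _ assms(5)] assms(4) lconfigs_subset by blast
qed

theorem mainTheorem11: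
  fixes E :: "'a set" and ent :: "'a set \<Rightarrow> 'a set \<Rightarrow> bool"
  assumes "event_structure E ent"
  defines "C \<equiv> lconfigs E ent"
  shows "(es_singular E ent \<longrightarrow> closed_bounded_unions C)
    \<and> (es_conjunctive E ent \<longrightarrow> closed_nonempty_inters C)
    \<and> (es_locally_conjunctive E ent \<longrightarrow> closed_bounded_nonempty_inters C)
    \<and> (es_finite_conflict E ent \<longrightarrow> cs_finite_conflict E C)
    \<and> (es_binary_conflict E ent \<longrightarrow> cs_binary_conflict E C)
    \<and> (es_singular E ent \<and> es_finite_conflict E ent \<longrightarrow> closed_fin_con_unions C)
    \<and> (es_singular E ent \<and> es_binary_conflict E ent \<longrightarrow> closed_pair_con_unions C)
    \<and> (es_locally_conjunctive E ent \<and> es_finite_conflict E ent \<longrightarrow> closed_fin_con_nonempty_inters C)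
    \<and> (es_locally_conjunctive E ent \<and> es_binary_conflict E ent \<longrightarrow> closed_pair_con_nonempty_inters C)"
proof (intro conjI impI)
  show "closed_bounded_unions C" if "es_singular E ent"
    unfolding closed_bounded_unions_def C_def using lconfigs_Union_bounded[OF that] by blast
  show "closed_nonempty_inters C" if "es_conjunctive E ent"
    unfolding closed_nonempty_inters_def C_def using lconfigs_Inter_conjunctive[OF that] by blast
  show "closed_bounded_nonempty_inters C" if "es_locally_conjunctive E ent"
    unfolding closed_bounded_nonempty_inters_def C_def using lconfigs_Inter_bounded[OF that] by blast
  show "cs_finite_conflict E C" if "es_finite_conflict E ent"
    unfolding cs_finite_conflict_iff C_def
    using cs_conflict_beyond_lconfigs that[unfolded es_finite_conflict_iff] .
  show "cs_binary_conflict E C" if "es_binary_conflict E ent"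
    unfolding cs_binary_conflict_iff C_def
    using cs_conflict_beyond_lconfigs that[unfolded es_binary_conflict_iff] .
  show "closed_fin_con_unions C" if "es_singular E ent \<and> es_finite_conflict E ent"
    unfolding closed_fin_con_unions_def cs_fin_Con_iff C_def
    using lconfigs_Union_cs_small_Con that[unfolded es_finite_conflict_iff] by blast
  show "closed_pair_con_unions C" if "es_singular E ent \<and> es_binary_conflict E ent"
    unfolding closed_pair_con_unions_def cs_pair_Con_iff C_def
    using lconfigs_Union_cs_small_Con that[unfolded es_binary_conflict_iff] by blast
  show "closed_fin_con_nonempty_inters C" if "es_locally_conjunctive E ent \<and> es_finite_conflict E ent"
    unfolding closed_fin_con_nonempty_inters_def cs_fin_Con_iff C_def
    using lconfigs_Inter_cs_small_Con that[unfolded es_finite_conflict_iff] by blast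
  show "closed_pair_con_nonempty_inters C" if "es_locally_conjunctive E ent \<and> es_binary_conflict E ent"
    unfolding closed_pair_con_nonempty_inters_def cs_pair_Con_iff C_def
    using lconfigs_Inter_cs_small_Con that[unfolded es_binary_conflict_iff] by blast
qed

end
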